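(* Let $P\in\mathbb{R}[X,Y]$ satisfy: (i) $P(-X,-Y)=P(X,Y)$; (ii) $P(X,Y)=-P(Y,X)$; (iii) $2P(X,Y)=P(Y,-X-Y)-P(X,-X-Y)$; (iv) $\frac{1}{X}P(Y,X-Y)+\frac{1}{Y}P(X,Y-X)=0$ as an identity of rational functions. Then $P=0$. *)

theory Defs
  imports "HOL-Computational_Algebra.Polynomial"
begin

text \<open>A bivariate real polynomial P in R[X,Y] is represented as an element of (R[Y])[X],
  i.e. of type real poly poly (outer variable X, coefficients are polynomials in Y).\<close>

definition eval2 :: "real poly poly \<Rightarrow> real \<Rightarrow> real \<Rightarrow> real" where
  "eval2 P x y = poly (map_poly (\<lambda>q. poly q y) P) x"

end

theory Submission
  imports Defs
begin

text \<open>Write \<open>f = eval2 P\<close>. Antisymmetry (ii) turns the three-term relation (iii) into the cyclic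
  symmetry \<open>f x y = f y (-x-y)\<close>; together with evenness (i) this gives \<open>f (a+b) (-b) = - f a b\<close>,
  so (iv) at \<open>(a, a+b)\<close> reads \<open>(1/(a+b) - 1/a) f a b = 0\<close>. Hence \<open>f\<close> vanishes off the three
  lines \<open>a = 0\<close>, \<open>b = 0\<close>, \<open>a + b = 0\<close>, and a bivariate polynomial doing so is zero.\<close>

lemma three_term_relation_cyclic:
  fixes f :: "'a::field_char_0 \<Rightarrow> 'a \<Rightarrow> 'a"
  assumes antisym: "\<And>x y. f x y = - f y x"
    and three_term: "\<And>x y. 2 * f x y = f y (-x-y) - f x (-x-y)"
  shows "f x y = f y (-x-y)"
proof -
  have "2 * f x y = f y (-x-y) + f (-x-y) x"
    using three_term[of x y] antisym[of x "-x-y"] by simp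
  moreover have "2 * f y (-x-y) = f (-x-y) x + f x y"
    using three_term[of y "-x-y"] antisym[of y x] by (simp add: algebra_simps)
  ultimately have "3 * (f x y - f y (-x-y)) = 0" by algebra
  then show ?thesis by simp
qed

lemma period_relations_vanish:
  fixes f :: "'a::field_char_0 \<Rightarrow> 'a \<Rightarrow> 'a"
  assumes even: "\<And>x y. f (-x) (-y) = f x y"
    and antisym: "\<And>x y. f x y = - f y x"
    and three_term: "\<And>x y. 2 * f x y = f y (-x-y) - f x (-x-y)"
    and two_term: "\<And>x y. x \<noteq> 0 \<Longrightarrow> y \<noteq> 0 \<Longrightarrow> (1/x) * f y (x-y) + (1/y) * f x (y-x) = 0"
    and "a \<noteq> 0" "b \<noteq> 0" "a + b \<noteq> 0"
  shows "f a b = 0"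
proof -
  have "f (a+b) (-b) = f (-b) (-a)"
    using three_term_relation_cyclic[OF antisym three_term, of "a+b" "-b"] by simp
  also have "\<dots> = - f a b"
    using even[of b a] antisym[of b a] by simp
  finally have "(1/(a+b) - 1/a) * f a b = 0"
    using two_term[of a "a+b"] assms(5,7) by (simp add: left_diff_distrib)
  moreover have "1/(a+b) - 1/a \<noteq> 0"
    using assms(5-7) by simp
  ultimately show ?thesis by simp
qed

lemma poly_eq_0_if_finite_nonzeros:
  fixes p :: "'a::{idom,ring_char_0} poly"
  assumes "finite {x. poly p x \<noteq> 0}"
  shows "p = 0"
proof (rule ccontr)
  assume "p \<noteq> 0"
  then have "finite {x. poly p x = 0}" by (rule poly_roots_finite)
  with assms have "finite ({x. poly p x = 0} \<union> {x. poly p x \<noteq> 0})" by simp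
  then show False using infinite_UNIV_char_0[where 'a='a] by (simp add: Un_def)
qed

lemma eval2_eq_0_if_finite_nonzeros:
  assumes "finite B" and "\<And>y. y \<notin> B \<Longrightarrow> finite {x. eval2 P x y \<noteq> 0}"
  shows "P = 0"
proof -
  have "poly (coeff P n) y = 0" if "y \<notin> B" for y n
  proof -
    have "map_poly (\<lambda>q. poly q y) P = 0"
      using assms(2)[OF that] by (intro poly_eq_0_if_finite_nonzeros) (simp add: eval2_def)
    then show ?thesis by (metis coeff_0 coeff_map_poly poly_0)
  qed
  then have "finite {y. poly (coeff P n) y \<noteq> 0}" for n
    by (intro finite_subset[OF _ assms(1)]) auto
  then show ?thesis
    by (metis coeff_0 poly_eq_0_if_finite_nonzeros poly_eqI)
qed

theorem mainTheorem9:
  fixes P :: "real poly poly"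
  assumes i: "\<And>x y. eval2 P (-x) (-y) = eval2 P x y"
    and ii: "\<And>x y. eval2 P x y = - eval2 P y x"
    and iii: "\<And>x y. 2 * eval2 P x y = eval2 P y (-x-y) - eval2 P x (-x-y)"
    and iv: "\<And>x y. x \<noteq> 0 \<Longrightarrow> y \<noteq> 0 \<Longrightarrow>
               (1/x) * eval2 P y (x-y) + (1/y) * eval2 P x (y-x) = 0"
  shows "P = 0"
proof (rule eval2_eq_0_if_finite_nonzeros)
  fix y :: real
  assume "y \<notin> {0}"
  then have "{x. eval2 P x y \<noteq> 0} \<subseteq> {0, -y}"
    using period_relations_vanish[of "eval2 P", OF i ii iii iv] by force
  then show "finite {x. eval2 P x y \<noteq> 0}"
    by (rule finite_subset) simp
qed simp

end
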